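(* Let $G$ be a finitely generated group and $\phi\in\mathrm{Aut}(G)$. Then: (i) if $GCP_{Rat}(G\rtimes_\phi\mathbb{Z})$ is decidable, then $GBrCP_{(Rat,\phi)}(G)$ and $GTCP_{(Rat,\phi)}(G)$ are decidable; (ii) if $GCP_{Rat}(G\rtimes\mathbb{Z})$ is decidable, then $GBrCP_{Rat}(G)$ and $GTCP_{Rat}(G)$ are decidable; (iii) if $GCP_{Alg}(G\rtimes_\phi\mathbb{Z})$ is decidable, then $GBrCP_{(Alg,\phi)}(G)$ and $GTCP_{(Alg,\phi)}(G)$ are decidable; (iv) if $GCP_{Alg}(G\rtimes\mathbb{Z})$ is decidable, then $GBrCP_{Alg}(G)$ and $GTCP_{Alg}(G)$ are decidable.
   Context: $G\rtimes_\psi\mathbb{Z}$ is generated by $G$ and $t$ with $t^{-1}at=\psi(a)$. For a finitely generated group $X$ with finite generating set $A$ and canonical surjection $\pi:\tilde A^*\to X$ from the free monoid on $A\cup A^{-1}$, a subset $K\subseteq X$ is rational ($Rat$) if $K=L\pi$ for a rational language $L$, and algebraic ($Alg$) if $K=L\pi$ for a context-free language $L$ (given by automaton/grammar). For $\mathcal C\in\{Rat,Alg\}$: $GCP_{\mathcal C}(X)$: given $K\in\mathcal C(X)$ and $x\in X$, decide whether some conjugate of $x$ lies in $K$; $GCP_{\mathcal C}(G\rtimes\mathbb{Z})$ is the uniform version with the defining automorphism also part of the input. $GBrCP_{\mathcal C}(G)$: given $K\in\mathcal C(G)$, $\psi\in\mathrm{Aut}(G)$, $x\in G$, decide whether some $\psi^k(x)$,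 $k\in\mathbb{Z}$, is conjugate to an element of $K$. $GTCP_{\mathcal C}(G)$: given $K$, $\psi$, $x$, decide whether there is $z\in G$ with $\psi(z)^{-1}xz\in K$. The subscript $(\mathcal C,\phi)$ means the automorphism is fixed to be $\phi$. *)

theory Defs
  imports "HOL-Algebra.Algebra" "HOL-Library.Nat_Bijection"
begin

datatype recf = Zf | Sf | Proj nat | Comp recf "recf list" | Prec recf recf | Minf recf

inductive recf_eval :: "recf \<Rightarrow> nat list \<Rightarrow> nat \<Rightarrow> bool" where
  zero: "recf_eval Zf xs 0"
| succ: "recf_eval Sf (x # xs) (Suc x)"
| proj: "i < length xs \<Longrightarrow> recf_eval (Proj i) xs (xs ! i)"
| comp: "list_all2 (\<lambda>g y. recf_eval g xs y) gs ys \<Longrightarrow> recf_eval f ys r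
         \<Longrightarrow> recf_eval (Comp f gs) xs r"
| prec0: "recf_eval f xs r \<Longrightarrow> recf_eval (Prec f g) (0 # xs) r"
| precS: "recf_eval (Prec f g) (n # xs) r \<Longrightarrow> recf_eval g (n # r # xs) r'
         \<Longrightarrow> recf_eval (Prec f g) (Suc n # xs) r'"
| minf: "recf_eval f (n # xs) 0 \<Longrightarrow> (\<forall>m<n. \<exists>r. 0 < r \<and> recf_eval f (m # xs) r)
         \<Longrightarrow> recf_eval (Minf f) xs n"

definition decidable_on :: "'i set \<Rightarrow> ('i \<Rightarrow> nat) \<Rightarrow> ('i \<Rightarrow> bool) \<Rightarrow> bool" where
  "decidable_on V enc P \<longleftrightarrow>
     (\<exists>f. \<forall>x\<in>V. recf_eval f [enc x] (if P x then 1 else 0))"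

text \<open>An NFA: list of transitions (p, letter, q), initial states, final states.\<close>
type_synonym nfa = "(nat \<times> nat \<times> nat) list \<times> nat list \<times> nat list"

inductive nfa_run :: "(nat \<times> nat \<times> nat) list \<Rightarrow> nat \<Rightarrow> nat list \<Rightarrow> nat \<Rightarrow> bool" where
  "nfa_run T p [] p"
| "(p, a, q) \<in> set T \<Longrightarrow> nfa_run T q w r \<Longrightarrow> nfa_run T p (a # w) r"

definition nfa_lang :: "nfa \<Rightarrow> nat list \<Rightarrow> bool" where
  "nfa_lang A w \<longleftrightarrow> (case A of (T, I, F) \<Rightarrow>
     (\<exists>p\<in>set I. \<exists>q\<in>set F. nfa_run T p w q))"

definition nfa_enc :: "nfa \<Rightarrow> nat" where
  "nfa_enc A = (case A of (T, I, F) \<Rightarrow>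
     list_encode [list_encode (map (\<lambda>(p, a, q). prod_encode (p, prod_encode (a, q))) T),
                  list_encode I, list_encode F])"

text \<open>A CFG: productions (N, rhs) with rhs symbols Inl terminal / Inr nonterminal,
  and a start nonterminal.\<close>
type_synonym cfg = "(nat \<times> (nat + nat) list) list \<times> nat"

inductive cfg_gen :: "(nat \<times> (nat + nat) list) list \<Rightarrow> nat \<Rightarrow> nat list \<Rightarrow> bool"
  and cfg_genseq :: "(nat \<times> (nat + nat) list) list \<Rightarrow> (nat + nat) list \<Rightarrow> nat list \<Rightarrow> bool"
  for P where
  "(N, rhs) \<in> set P \<Longrightarrow> cfg_genseq P rhs w \<Longrightarrow> cfg_gen P N w"
| "cfg_genseq P [] []"
| "cfg_genseq P rhs w \<Longrightarrow> cfg_genseq P (Inl a # rhs) (a # w)"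
| "cfg_gen P N v \<Longrightarrow> cfg_genseq P rhs w \<Longrightarrow> cfg_genseq P (Inr N # rhs) (v @ w)"

definition cfg_lang :: "cfg \<Rightarrow> nat list \<Rightarrow> bool" where
  "cfg_lang C w \<longleftrightarrow> cfg_gen (fst C) (snd C) w"

definition sym_enc :: "nat + nat \<Rightarrow> nat" where
  "sym_enc s = (case s of Inl a \<Rightarrow> 2 * a | Inr N \<Rightarrow> 2 * N + 1)"

definition cfg_enc :: "cfg \<Rightarrow> nat" where
  "cfg_enc C = prod_encode
     (list_encode (map (\<lambda>(N, rhs). prod_encode (N, list_encode (map sym_enc rhs))) (fst C)),
      snd C)"

text \<open>With generators gens of length n, letter code c < 2n stands for gens!(c div 2)
  if c is even and for its inverse if c is odd.\<close>
definition alph_ok :: "nat \<Rightarrow> nat list \<Rightarrow> bool" where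
  "alph_ok n w \<longleftrightarrow> (\<forall>c\<in>set w. c < 2 * n)"

definition letter_val :: "('a, 'b) monoid_scheme \<Rightarrow> 'a list \<Rightarrow> nat \<Rightarrow> 'a" where
  "letter_val G gens c =
     (if even c then gens ! (c div 2) else inv\<^bsub>G\<^esub> (gens ! (c div 2)))"

definition word_val :: "('a, 'b) monoid_scheme \<Rightarrow> 'a list \<Rightarrow> nat list \<Rightarrow> 'a" where
  "word_val G gens w = foldr (\<lambda>c acc. letter_val G gens c \<otimes>\<^bsub>G\<^esub> acc) w \<one>\<^bsub>G\<^esub>"

definition aut_pow :: "('a, 'b) monoid_scheme \<Rightarrow> ('a \<Rightarrow> 'a) \<Rightarrow> int \<Rightarrow> 'a \<Rightarrow> 'a" where
  "aut_pow G \<phi> k = (if 0 \<le> k then \<phi> ^^ nat k else (inv_into (carrier G) \<phi>) ^^ nat (- k))"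

text \<open>Elements g t^k of G \<rtimes>_\<phi> Z as pairs (g, k), where t^-1 a t = \<phi> a.\<close>
definition sd_mult :: "('a, 'b) monoid_scheme \<Rightarrow> ('a \<Rightarrow> 'a) \<Rightarrow> 'a \<times> int \<Rightarrow> 'a \<times> int \<Rightarrow> 'a \<times> int" where
  "sd_mult G \<phi> x y = (case x of (g, k) \<Rightarrow> case y of (h, m) \<Rightarrow>
     (g \<otimes>\<^bsub>G\<^esub> aut_pow G \<phi> (- k) h, k + m))"

definition sd_inv :: "('a, 'b) monoid_scheme \<Rightarrow> ('a \<Rightarrow> 'a) \<Rightarrow> 'a \<times> int \<Rightarrow> 'a \<times> int" where
  "sd_inv G \<phi> x = (case x of (g, k) \<Rightarrow> (aut_pow G \<phi> k (inv\<^bsub>G\<^esub> g), - k))"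

text \<open>Generators of G \<rtimes> Z: gens together with t; codes c < 2n as for G,
  code 2n is t and code 2n+1 is t^-1.\<close>
definition sd_letter_val :: "('a, 'b) monoid_scheme \<Rightarrow> 'a list \<Rightarrow> nat \<Rightarrow> 'a \<times> int" where
  "sd_letter_val G gens c =
     (if c < 2 * length gens then (letter_val G gens c, 0)
      else if c = 2 * length gens then (\<one>\<^bsub>G\<^esub>, 1) else (\<one>\<^bsub>G\<^esub>, -1))"

definition sd_word_val :: "('a, 'b) monoid_scheme \<Rightarrow> ('a \<Rightarrow> 'a) \<Rightarrow> 'a list \<Rightarrow> nat list \<Rightarrow> 'a \<times> int" where
  "sd_word_val G \<phi> gens w =
     foldr (\<lambda>c acc. sd_mult G \<phi> (sd_letter_val G gens c) acc) w (\<one>\<^bsub>G\<^esub>, 0)"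

definition aut_words_ok :: "('a, 'b) monoid_scheme \<Rightarrow> 'a list \<Rightarrow> nat list list \<Rightarrow> bool" where
  "aut_words_ok G gens pw \<longleftrightarrow> length pw = length gens \<and> (\<forall>v\<in>set pw. alph_ok (length gens) v) \<and>
     (\<exists>\<psi>\<in>auto G. \<forall>i<length gens. \<psi> (gens ! i) = word_val G gens (pw ! i))"

definition aut_of :: "('a, 'b) monoid_scheme \<Rightarrow> 'a list \<Rightarrow> nat list list \<Rightarrow> 'a \<Rightarrow> 'a" where
  "aut_of G gens pw = (SOME \<psi>. \<psi> \<in> auto G \<and>
     (\<forall>i<length gens. \<psi> (gens ! i) = word_val G gens (pw ! i)))"

section \<open>The problems (lang: semantics of language descriptions, Rat or Alg)\<close>

definition GCP_sd_prop ::
  "('d \<Rightarrow> nat list \<Rightarrow> bool) \<Rightarrow> ('a, 'b) monoid_scheme \<Rightarrow> 'a list \<Rightarrow> ('a \<Rightarrow> 'a) \<Rightarrow> 'd \<Rightarrow> nat list \<Rightarrow> bool" where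
  "GCP_sd_prop lang G gens \<phi> L xw \<longleftrightarrow>
     (\<exists>w z. lang L w \<and> alph_ok (Suc (length gens)) w \<and> z \<in> carrier G \<times> (UNIV :: int set) \<and>
        sd_word_val G \<phi> gens w =
          sd_mult G \<phi> (sd_inv G \<phi> z) (sd_mult G \<phi> (sd_word_val G \<phi> gens xw) z))"

definition GBrCP_prop ::
  "('d \<Rightarrow> nat list \<Rightarrow> bool) \<Rightarrow> ('a, 'b) monoid_scheme \<Rightarrow> 'a list \<Rightarrow> ('a \<Rightarrow> 'a) \<Rightarrow> 'd \<Rightarrow> nat list \<Rightarrow> bool" where
  "GBrCP_prop lang G gens \<phi> L xw \<longleftrightarrow>
     (\<exists>(k::int) w z. lang L w \<and> alph_ok (length gens) w \<and> z \<in> carrier G \<and>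
        word_val G gens w = inv\<^bsub>G\<^esub> z \<otimes>\<^bsub>G\<^esub> aut_pow G \<phi> k (word_val G gens xw) \<otimes>\<^bsub>G\<^esub> z)"

definition GTCP_prop ::
  "('d \<Rightarrow> nat list \<Rightarrow> bool) \<Rightarrow> ('a, 'b) monoid_scheme \<Rightarrow> 'a list \<Rightarrow> ('a \<Rightarrow> 'a) \<Rightarrow> 'd \<Rightarrow> nat list \<Rightarrow> bool" where
  "GTCP_prop lang G gens \<phi> L xw \<longleftrightarrow>
     (\<exists>w z. lang L w \<and> alph_ok (length gens) w \<and> z \<in> carrier G \<and>
        word_val G gens w = inv\<^bsub>G\<^esub> (\<phi> z) \<otimes>\<^bsub>G\<^esub> word_val G gens xw \<otimes>\<^bsub>G\<^esub> z)"

text \<open>Fixed-automorphism versions: inputs (K, x).\<close>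
definition fixed_enc :: "('d \<Rightarrow> nat) \<Rightarrow> 'd \<times> nat list \<Rightarrow> nat" where
  "fixed_enc enc i = prod_encode (enc (fst i), list_encode (snd i))"

definition decidable_fixed ::
  "('d \<Rightarrow> nat) \<Rightarrow> nat \<Rightarrow> ('d \<Rightarrow> nat list \<Rightarrow> bool) \<Rightarrow> bool" where
  "decidable_fixed enc m P \<longleftrightarrow>
     decidable_on {i. alph_ok m (snd i)} (fixed_enc enc) (\<lambda>i. P (fst i) (snd i))"

text \<open>Uniform versions: inputs (automorphism as images of generators, K, x).\<close>
definition unif_enc :: "('d \<Rightarrow> nat) \<Rightarrow> nat list list \<times> 'd \<times> nat list \<Rightarrow> nat" where
  "unif_enc enc i = prod_encode (list_encode (map list_encode (fst i)),
                      prod_encode (enc (fst (snd i)), list_encode (snd (snd i))))"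

definition decidable_unif ::
  "('a, 'b) monoid_scheme \<Rightarrow> 'a list \<Rightarrow> ('d \<Rightarrow> nat) \<Rightarrow> nat \<Rightarrow>
     (('a \<Rightarrow> 'a) \<Rightarrow> 'd \<Rightarrow> nat list \<Rightarrow> bool) \<Rightarrow> bool" where
  "decidable_unif G gens enc m P \<longleftrightarrow>
     decidable_on {i. aut_words_ok G gens (fst i) \<and> alph_ok m (snd (snd i))} (unif_enc enc)
       (\<lambda>i. P (aut_of G gens (fst i)) (fst (snd i)) (snd (snd i)))"

end

theory Submission
  imports Defs
begin

text \<open>Let n be the number of generators, so that the letters below 2 n spell elements of G and
  the letter 2 n spells t. In the semidirect product, conjugating x \<in> G by g t^k gives
  \<phi>^k(g)^-1 \<phi>^k(x) \<phi>^k(g). Hence x has a conjugate in a subset K of G iff some \<phi>^k(x) is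
  conjugate in G into K: the Brinkmann problem for (K, x) is the generalized conjugacy problem
  for (K, x). Likewise the conjugates of t x lying in t G are the elements t \<phi>(h)^-1 \<phi>^k(x) h,
  and \<phi>^k(x) is twisted-conjugate to x, so the twisted problem for (K, x) is the generalized
  conjugacy problem for (t K, t x). Cutting an automaton or a grammar down to the letters of G,
  and prefixing its language with t, are computable operations on codes, so both are many-one
  reductions, uniformly in \<phi>.\<close>

section \<open>Total recursive functions\<close>

definition computable :: "nat \<Rightarrow> (nat list \<Rightarrow> nat) \<Rightarrow> bool" where
  "computable k g \<longleftrightarrow> (\<exists>f. \<forall>xs. length xs = k \<longrightarrow> recf_eval f xs (g xs))"

lemma computable_cong:
  "computable k f \<Longrightarrow> (\<And>xs. length xs = k \<Longrightarrow> f xs = g xs) \<Longrightarrow> computable k g"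
  unfolding computable_def by metis

fun const_recf :: "nat \<Rightarrow> recf" where
  "const_recf 0 = Zf"
| "const_recf (Suc c) = Comp Sf [const_recf c]"

lemma recf_eval_const_recf: "recf_eval (const_recf c) xs c"
proof (induction c)
  case 0
  show ?case by (simp add: recf_eval.zero)
next
  case (Suc c)
  then have "list_all2 (\<lambda>g y. recf_eval g xs y) [const_recf c] [c]" by simp
  then show ?case by (auto intro: recf_eval.comp recf_eval.succ)
qed

lemma computable_const: "computable k (\<lambda>_. c)"
  unfolding computable_def using recf_eval_const_recf by blast

lemma computable_nth: "i < k \<Longrightarrow> computable k (\<lambda>xs. xs ! i)"
  unfolding computable_def using recf_eval.proj by metis

lemma computable_comp:
  assumes "computable (length gs) h" and "\<forall>g\<in>set gs. computable k g"
  shows "computable k (\<lambda>xs. h (map (\<lambda>g. g xs) gs))"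
proof -
  obtain fh where fh: "\<And>ys. length ys = length gs \<Longrightarrow> recf_eval fh ys (h ys)"
    using assms(1) unfolding computable_def by blast
  obtain F where F: "\<And>g xs. g \<in> set gs \<Longrightarrow> length xs = k \<Longrightarrow> recf_eval (F g) xs (g xs)"
    using assms(2) unfolding computable_def by metis
  have "recf_eval (Comp fh (map F gs)) xs (h (map (\<lambda>g. g xs) gs))" if "length xs = k" for xs
  proof (rule recf_eval.comp)
    show "list_all2 (\<lambda>g y. recf_eval g xs y) (map F gs) (map (\<lambda>g. g xs) gs)"
      using F that by (simp add: list_all2_map1 list_all2_map2 list_all2_same)
    show "recf_eval fh (map (\<lambda>g. g xs) gs) (h (map (\<lambda>g. g xs) gs))"
      using fh by simp
  qed
  then show ?thesis unfolding computable_def by blast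
qed

lemma computable_comp1:
  "computable 1 (\<lambda>ys. h (ys ! 0)) \<Longrightarrow> computable k a \<Longrightarrow> computable k (\<lambda>xs. h (a xs))"
  using computable_comp[of "[a]" "\<lambda>ys. h (ys ! 0)" k] by simp

lemma computable_comp2:
  "computable 2 (\<lambda>ys. h (ys ! 0) (ys ! 1)) \<Longrightarrow> computable k a \<Longrightarrow> computable k b
    \<Longrightarrow> computable k (\<lambda>xs. h (a xs) (b xs))"
  using computable_comp[of "[a, b]" "\<lambda>ys. h (ys ! 0) (ys ! 1)" k] by (simp add: numeral_2_eq_2)

lemma computable_comp3:
  "computable 3 (\<lambda>ys. h (ys ! 0) (ys ! 1) (ys ! 2)) \<Longrightarrow> computable k a \<Longrightarrow> computable k b
    \<Longrightarrow> computable k c \<Longrightarrow> computable k (\<lambda>xs. h (a xs) (b xs) (c xs))"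
  using computable_comp[of "[a, b, c]" "\<lambda>ys. h (ys ! 0) (ys ! 1) (ys ! 2)" k]
  by (simp add: numeral_3_eq_3)

lemma computable_prim_rec:
  assumes "computable k f" and "computable (Suc (Suc k)) g"
    and F_0: "\<And>ys. length ys = k \<Longrightarrow> F (0 # ys) = f ys"
    and F_Suc: "\<And>n ys. length ys = k \<Longrightarrow> F (Suc n # ys) = g (n # F (n # ys) # ys)"
  shows "computable (Suc k) F"
proof -
  obtain ff where ff: "\<And>ys. length ys = k \<Longrightarrow> recf_eval ff ys (f ys)"
    using assms(1) unfolding computable_def by blast
  obtain gg where gg: "\<And>zs. length zs = Suc (Suc k) \<Longrightarrow> recf_eval gg zs (g zs)"
    using assms(2) unfolding computable_def by blast
  have Prec: "recf_eval (Prec ff gg) (n # ys) (F (n # ys))" if "length ys = k" for n ys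
  proof (induction n)
    case 0
    show ?case using ff[OF that] F_0[OF that] by (simp add: recf_eval.prec0)
  next
    case (Suc n)
    show ?case using recf_eval.precS[OF Suc gg] that F_Suc[OF that] by simp
  qed
  show ?thesis
    unfolding computable_def
  proof (intro exI allI impI)
    fix xs :: "nat list"
    assume "length xs = Suc k"
    then obtain n ys where "xs = n # ys" "length ys = k" by (cases xs) auto
    then show "recf_eval (Prec ff gg) xs (F xs)" using Prec by simp
  qed
qed

lemma computable_Least:
  assumes "computable (Suc k) f" and "\<And>xs. length xs = k \<Longrightarrow> \<exists>n. f (n # xs) = 0"
  shows "computable k (\<lambda>xs. LEAST n. f (n # xs) = 0)"
proof -
  obtain ff where ff: "\<And>ys. length ys = Suc k \<Longrightarrow> recf_eval ff ys (f ys)"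
    using assms(1) unfolding computable_def by blast
  have "recf_eval (Minf ff) xs (LEAST n. f (n # xs) = 0)" if xs: "length xs = k" for xs
  proof (rule recf_eval.minf)
    have "f ((LEAST n. f (n # xs) = 0) # xs) = 0"
      using assms(2)[OF xs] by (rule LeastI_ex)
    then show "recf_eval ff ((LEAST n. f (n # xs) = 0) # xs) 0"
      using ff[of "(LEAST n. f (n # xs) = 0) # xs"] xs by simp
    show "\<forall>m<(LEAST n. f (n # xs) = 0). \<exists>r>0. recf_eval ff (m # xs) r"
      using ff[of "_ # xs"] xs not_less_Least by fastforce
  qed
  then show ?thesis unfolding computable_def by blast
qed

lemma computable_Suc:
  assumes "computable k a"
  shows "computable k (\<lambda>xs. Suc (a xs))"
proof -
  have "recf_eval Sf ys (Suc (ys ! 0))" if "length ys = 1" for ys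
    using that recf_eval.succ by (cases ys) auto
  then have "computable 1 (\<lambda>ys. Suc (ys ! 0))" unfolding computable_def by blast
  then show ?thesis using assms by (rule computable_comp1)
qed

lemma computable_add:
  assumes "computable k a" and "computable k b"
  shows "computable k (\<lambda>xs. a xs + b xs)"
proof -
  have "computable 2 (\<lambda>ys. ys ! 0 + ys ! 1)"
    unfolding numeral_2_eq_2
  proof (rule computable_prim_rec)
    show "computable (Suc 0) (\<lambda>ys. ys ! 0)" by (simp add: computable_nth)
    show "computable (Suc (Suc (Suc 0))) (\<lambda>zs. Suc (zs ! 1))" by (simp add: computable_nth computable_Suc)
  qed auto
  then show ?thesis using assms by (rule computable_comp2[where h = "(+)"])
qed

lemma computable_mult:
  assumes "computable k a" and "computable k b"
  shows "computable k (\<lambda>xs. a xs * b xs)"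
proof -
  have "computable 2 (\<lambda>ys. ys ! 0 * ys ! 1)"
    unfolding numeral_2_eq_2
  proof (rule computable_prim_rec)
    show "computable (Suc 0) (\<lambda>_. 0)" by (rule computable_const)
    show "computable (Suc (Suc (Suc 0))) (\<lambda>zs. zs ! 1 + zs ! 2)"
      by (simp add: computable_nth computable_add)
  qed auto
  then show ?thesis using assms by (rule computable_comp2[where h = "(*)"])
qed

lemma computable_diff:
  assumes "computable k a" and "computable k b"
  shows "computable k (\<lambda>xs. a xs - b xs)"
proof -
  have pred: "computable 1 (\<lambda>ys. ys ! 0 - 1)"
    unfolding One_nat_def
  proof (rule computable_prim_rec)
    show "computable 0 (\<lambda>_. 0)" by (rule computable_const)
    show "computable (Suc (Suc 0)) (\<lambda>zs. zs ! 0)" by (simp add: computable_nth)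
  qed auto
  have "computable 2 (\<lambda>ys. ys ! 1 - ys ! 0)"
    unfolding numeral_2_eq_2
  proof (rule computable_prim_rec)
    show "computable (Suc 0) (\<lambda>ys. ys ! 0)" by (simp add: computable_nth)
    show "computable (Suc (Suc (Suc 0))) (\<lambda>zs. zs ! 1 - 1)"
      using pred by (rule computable_comp1[where h = "\<lambda>x. x - 1"]) (simp add: computable_nth)
  qed auto
  then show ?thesis using assms(2,1) by (rule computable_comp2[where h = "\<lambda>x y. y - x"])
qed

lemma computable_of_bool_less:
  assumes "computable k a" and "computable k b"
  shows "computable k (\<lambda>xs. of_bool (a xs < b xs))"
proof -
  have "computable k (\<lambda>xs. 1 - (1 - (b xs - a xs)))"
    using assms by (intro computable_diff computable_const)
  then show ?thesis by (rule computable_cong) simp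
qed

lemma computable_of_bool_eq_0:
  assumes "computable k a"
  shows "computable k (\<lambda>xs. of_bool (a xs = 0))"
proof -
  have "computable k (\<lambda>xs. 1 - a xs)"
    using assms by (intro computable_diff computable_const)
  then show ?thesis by (rule computable_cong) simp
qed

lemma computable_if:
  assumes "computable k (\<lambda>xs. of_bool (P xs))" and "computable k a" and "computable k b"
  shows "computable k (\<lambda>xs. if P xs then a xs else b xs)"
proof -
  have "computable k (\<lambda>xs. of_bool (P xs) * a xs + (1 - of_bool (P xs)) * b xs)"
    using assms by (intro computable_add computable_mult computable_diff computable_const)
  then show ?thesis by (rule computable_cong) simp
qed

lemma computable_of_bool_imp:
  assumes "computable k (\<lambda>xs. of_bool (P xs))" and "computable k (\<lambda>xs. of_bool (Q xs))"
  shows "computable k (\<lambda>xs. of_bool (P xs \<longrightarrow> Q xs))"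
proof -
  have "computable k (\<lambda>xs. if P xs then of_bool (Q xs) else 1)"
    using assms by (intro computable_if computable_const)
  then show ?thesis by (rule computable_cong) simp
qed

lemma computable_mod_2:
  assumes "computable k a"
  shows "computable k (\<lambda>xs. a xs mod 2)"
proof -
  have "computable 1 (\<lambda>ys. ys ! 0 mod 2)"
    unfolding One_nat_def
  proof (rule computable_prim_rec)
    show "computable 0 (\<lambda>_. 0)" by (rule computable_const)
    show "computable (Suc (Suc 0)) (\<lambda>zs. 1 - zs ! 1)"
      by (simp add: computable_nth computable_const computable_diff)
  qed (auto simp: mod_Suc)
  then show ?thesis using assms by (rule computable_comp1[where h = "\<lambda>x. x mod 2"])
qed

lemma computable_triangle:
  assumes "computable k a"
  shows "computable k (\<lambda>xs. triangle (a xs))"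
proof -
  have "computable 1 (\<lambda>ys. triangle (ys ! 0))"
    unfolding One_nat_def
  proof (rule computable_prim_rec)
    show "computable 0 (\<lambda>_. 0)" by (rule computable_const)
    show "computable (Suc (Suc 0)) (\<lambda>zs. zs ! 1 + Suc (zs ! 0))"
      by (simp add: computable_nth computable_add computable_Suc)
  qed auto
  then show ?thesis using assms by (rule computable_comp1[where h = triangle])
qed

lemma computable_prod_encode:
  assumes "computable k a" and "computable k b"
  shows "computable k (\<lambda>xs. prod_encode (a xs, b xs))"
  unfolding prod_encode_def using assms by (simp add: computable_add computable_triangle)

lemma triangle_mono: "m \<le> n \<Longrightarrow> triangle m \<le> triangle n"
  by (induction n) (auto simp: le_Suc_eq)

text \<open>prod_encode (a, b) lies on the diagonal s = a + b, between triangle s and triangle (Suc s).\<close>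
lemma prod_decode_via_Least:
  fixes m :: nat
  defines "s \<equiv> LEAST s. m < triangle (Suc s)"
  shows "prod_decode m = (m - triangle s, s - (m - triangle s))"
proof -
  obtain a b where m: "m = prod_encode (a, b)" by (metis prod_decode_inverse prod.exhaust)
  have "s = a + b"
    unfolding s_def
  proof (rule Least_equality)
    show "m < triangle (Suc (a + b))" by (simp add: m prod_encode_def)
  next
    fix s assume "m < triangle (Suc s)"
    then show "a + b \<le> s"
      using triangle_mono[of "Suc s" "a + b"] by (force simp: m prod_encode_def)
  qed
  then show ?thesis unfolding m prod_encode_inverse by (simp add: prod_encode_def)
qed

lemma computable_diagonal:
  assumes "computable k a"
  shows "computable k (\<lambda>xs. LEAST s. a xs < triangle (Suc s))"
proof -
  have "computable (Suc 1) (\<lambda>ys. Suc (ys ! 1) - triangle (Suc (ys ! 0)))"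
    by (intro computable_diff computable_Suc computable_triangle computable_nth) auto
  then have "computable 1 (\<lambda>ys. LEAST s. Suc ((s # ys) ! 1) - triangle (Suc ((s # ys) ! 0)) = 0)"
  proof (rule computable_Least)
    fix ys :: "nat list"
    have "Suc (ys ! 0) \<le> triangle (Suc (ys ! 0))" by (induction "ys ! 0") auto
    then show "\<exists>s. Suc ((s # ys) ! 1) - triangle (Suc ((s # ys) ! 0)) = 0"
      by (intro exI[of _ "ys ! 0"]) auto
  qed
  then have "computable 1 (\<lambda>ys. LEAST s. ys ! 0 < triangle (Suc s))"
    by (rule computable_cong) (simp add: less_Suc_eq_le)
  then show ?thesis using assms by (rule computable_comp1[where h = "\<lambda>m. LEAST s. m < triangle (Suc s)"])
qed

lemma computable_fst_prod_decode:
  assumes "computable k a"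
  shows "computable k (\<lambda>xs. fst (prod_decode (a xs)))"
  unfolding prod_decode_via_Least fst_conv
  using assms by (intro computable_diff computable_triangle computable_diagonal)

lemma computable_snd_prod_decode:
  assumes "computable k a"
  shows "computable k (\<lambda>xs. snd (prod_decode (a xs)))"
  unfolding prod_decode_via_Least snd_conv
  using assms by (intro computable_diff computable_triangle computable_diagonal)

section \<open>Computing with codes of lists\<close>

definition list_code_hd :: "nat \<Rightarrow> nat" where
  "list_code_hd c = fst (prod_decode (c - 1))"

definition list_code_tl :: "nat \<Rightarrow> nat" where
  "list_code_tl c = snd (prod_decode (c - 1))"

definition list_code_Cons :: "nat \<Rightarrow> nat \<Rightarrow> nat" where
  "list_code_Cons x c = Suc (prod_encode (x, c))"

lemma list_code_hd_Suc_prod_encode [simp]: "list_code_hd (Suc (prod_encode (x, c))) = x"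
  by (simp add: list_code_hd_def)

lemma list_code_tl_Suc_prod_encode [simp]: "list_code_tl (Suc (prod_encode (x, c))) = c"
  by (simp add: list_code_tl_def)

lemma list_code_Cons_list_encode [simp]: "list_code_Cons x (list_encode xs) = list_encode (x # xs)"
  by (simp add: list_code_Cons_def)

lemma computable_list_code_hd: "computable k a \<Longrightarrow> computable k (\<lambda>xs. list_code_hd (a xs))"
  unfolding list_code_hd_def by (intro computable_fst_prod_decode computable_diff computable_const)

lemma computable_list_code_tl: "computable k a \<Longrightarrow> computable k (\<lambda>xs. list_code_tl (a xs))"
  unfolding list_code_tl_def by (intro computable_snd_prod_decode computable_diff computable_const)

lemma computable_list_code_Cons:
  "computable k a \<Longrightarrow> computable k b \<Longrightarrow> computable k (\<lambda>xs. list_code_Cons (a xs) (b xs))"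
  unfolding list_code_Cons_def by (intro computable_Suc computable_prod_encode)

lemma mem_le_list_encode: "x \<in> set l \<Longrightarrow> x \<le> list_encode l"
proof (induction l)
  case (Cons y l)
  then show ?case using le_prod_encode_1[of y "list_encode l"] le_prod_encode_2[of "list_encode l" y] by auto
qed simp

lemma length_le_list_encode: "length l \<le> list_encode l"
  by (induction l) (auto intro: le_trans[OF _ le_prod_encode_2])

lemma computable_foldl:
  assumes H: "computable 3 (\<lambda>ys. H (ys ! 0) (ys ! 1) (ys ! 2))"
    and p: "computable k p" and a: "computable k a" and c: "computable k c"
  shows "computable k (\<lambda>xs. foldl (H (p xs)) (a xs) (list_decode (c xs)))"
proof -
  text \<open>The state is the pair (code of the unprocessed suffix, accumulator). Iterating the
    step c times processes the whole list, as its length is at most its code c.\<close>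
  define step where "step p r =
    (if fst (prod_decode r) = 0 then r
     else prod_encode (list_code_tl (fst (prod_decode r)),
                       H p (snd (prod_decode r)) (list_code_hd (fst (prod_decode r)))))" for p r
  have step_Nil: "(step p ^^ n) (prod_encode (0, b)) = prod_encode (0, b)" for p n b
    by (induction n) (simp_all add: step_def)
  have iterate: "(step p ^^ n) (prod_encode (list_encode l, b)) =
      prod_encode (list_encode (drop n l), foldl (H p) b (take n l))" for p n l b
  proof (induction l arbitrary: n b)
    case Nil
    show ?case using step_Nil by simp
  next
    case (Cons x l)
    then show ?case
      by (cases n) (simp_all add: step_def funpow_Suc_right del: funpow.simps)
  qed
  have "computable (Suc 3) (\<lambda>ys. (step (ys ! 1) ^^ (ys ! 0)) (prod_encode (ys ! 2, ys ! 3)))"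
  proof (rule computable_prim_rec)
    show "computable 3 (\<lambda>ys. prod_encode (ys ! 1, ys ! 2))"
      by (intro computable_prod_encode computable_nth) auto
    show "computable (Suc (Suc 3)) (\<lambda>zs. step (zs ! 2) (zs ! 1))"
      unfolding step_def
      by (intro computable_if computable_of_bool_eq_0 computable_fst_prod_decode
            computable_prod_encode computable_list_code_tl computable_snd_prod_decode
            computable_comp3[OF H] computable_list_code_hd computable_nth) auto
  qed auto
  then have "computable k (\<lambda>xs. (\<lambda>ys. (step (ys ! 1) ^^ (ys ! 0)) (prod_encode (ys ! 2, ys ! 3)))
      (map (\<lambda>g. g xs) [c, p, c, a]))"
    using p a c by (intro computable_comp) (auto simp: numeral_3_eq_3)
  then have "computable k (\<lambda>xs. snd (prod_decode ((step (p xs) ^^ c xs) (prod_encode (c xs, a xs)))))"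
    by (intro computable_snd_prod_decode) simp
  then show ?thesis
  proof (rule computable_cong)
    fix xs :: "nat list"
    obtain l where l: "c xs = list_encode l" by (metis list_decode_inverse)
    show "snd (prod_decode ((step (p xs) ^^ c xs) (prod_encode (c xs, a xs)))) =
        foldl (H (p xs)) (a xs) (list_decode (c xs))"
      unfolding l iterate using length_le_list_encode[of l] by simp
  qed
qed

lemma foldl_list_code_Cons:
  "foldl (\<lambda>acc e. list_code_Cons (f e) acc) (list_encode l0) l = list_encode (rev (map f l) @ l0)"
  by (induction l arbitrary: l0) (simp_all del: list_encode.simps)

lemma foldl_filter_list_code_Cons:
  "foldl (\<lambda>acc e. if P e then list_code_Cons e acc else acc) (list_encode l0) l =
    list_encode (rev (filter P l) @ l0)"
  by (induction l arbitrary: l0) (simp_all del: list_encode.simps)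

lemma foldl_all:
  "foldl (\<lambda>acc e. if P e then acc else 0) b l = (if \<forall>e\<in>set l. P e then b else 0)"
  by (induction l arbitrary: b) auto

lemma computable_rev:
  assumes "computable k a"
  shows "computable k (\<lambda>xs. list_encode (rev (list_decode (a xs))))"
proof -
  have "computable k (\<lambda>xs. foldl (\<lambda>acc e. list_code_Cons e acc) (list_encode []) (list_decode (a xs)))"
    using assms by (intro computable_foldl computable_list_code_Cons computable_nth computable_const) auto
  then show ?thesis
    by (rule computable_cong)
       (simp only: foldl_list_code_Cons[where f = id, unfolded id_apply list.map_id] append_Nil2)
qed

lemma computable_filter:
  assumes P: "computable 1 (\<lambda>ys. of_bool (P (ys ! 0)))" and a: "computable k a"
  shows "computable k (\<lambda>xs. list_encode (filter P (list_decode (a xs))))"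
proof -
  have "computable 3 (\<lambda>ys. of_bool (P (ys ! 2)))"
    using P by (rule computable_comp1[where h = "\<lambda>x. of_bool (P x)"]) (simp add: computable_nth)
  then have "computable k (\<lambda>xs. list_encode (rev (list_decode
      (foldl (\<lambda>acc e. if P e then list_code_Cons e acc else acc) (list_encode []) (list_decode (a xs))))))"
    using a by (intro computable_rev computable_foldl computable_if computable_list_code_Cons
        computable_nth computable_const) auto
  then show ?thesis
    by (rule computable_cong) (simp only: foldl_filter_list_code_Cons list_encode_inverse rev_rev_ident append_Nil2)
qed

lemma computable_list_all:
  assumes P: "computable 1 (\<lambda>ys. of_bool (P (ys ! 0)))" and a: "computable k a"
  shows "computable k (\<lambda>xs. of_bool (\<forall>e\<in>set (list_decode (a xs)). P e))"
proof -
  have "computable 3 (\<lambda>ys. of_bool (P (ys ! 2)))"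
    using P by (rule computable_comp1[where h = "\<lambda>x. of_bool (P x)"]) (simp add: computable_nth)
  then have "computable k (\<lambda>xs. foldl (\<lambda>acc e. if P e then acc else 0) 1 (list_decode (a xs)))"
    using a by (intro computable_foldl computable_if computable_nth computable_const) auto
  then show ?thesis by (rule computable_cong) (simp add: foldl_all)
qed

lemma computable_map_append:
  assumes f: "computable 2 (\<lambda>ys. f (ys ! 0) (ys ! 1))"
    and p: "computable k p" and a: "computable k a" and b: "computable k b"
  shows "computable k (\<lambda>xs. list_encode (map (f (p xs)) (list_decode (a xs)) @ list_decode (b xs)))"
proof -
  have "computable 3 (\<lambda>ys. f (ys ! 0) (ys ! 2))"
    using f by (rule computable_comp2[where h = f]) (simp_all add: computable_nth)
  then have "computable k (\<lambda>xs. foldl (\<lambda>acc e. list_code_Cons (f (p xs) e) acc)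
      (list_encode (list_decode (b xs))) (list_decode (list_encode (rev (list_decode (a xs))))))"
    using p a b by (intro computable_foldl computable_list_code_Cons computable_rev computable_nth) auto
  then show ?thesis
    by (rule computable_cong) (simp only: foldl_list_code_Cons list_encode_inverse rev_map[symmetric] rev_rev_ident)
qed

section \<open>Many-one reductions\<close>

definition computable_map :: "('a \<Rightarrow> nat) \<Rightarrow> ('b \<Rightarrow> nat) \<Rightarrow> ('a \<Rightarrow> 'b) \<Rightarrow> bool" where
  "computable_map enc enc' F \<longleftrightarrow>
     (\<exists>t. computable 1 (\<lambda>xs. t (xs ! 0)) \<and> (\<forall>x. t (enc x) = enc' (F x)))"

lemma computable_mapI:
  "computable 1 (\<lambda>xs. t (xs ! 0)) \<Longrightarrow> (\<And>x. t (enc x) = enc' (F x)) \<Longrightarrow>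
    computable_map enc enc' F"
  unfolding computable_map_def by blast

lemma computable_map_id: "computable_map enc enc id"
  by (rule computable_mapI[where t = id]) (simp_all add: computable_nth)

lemma computable_map_Cons: "computable_map list_encode list_encode (Cons x)"
  by (rule computable_mapI[where t = "list_code_Cons x"])
     (simp_all add: computable_list_code_Cons computable_const computable_nth)

lemma computable_map_fixed_enc:
  assumes "computable_map enc enc f" and "computable_map list_encode list_encode g"
  shows "computable_map (fixed_enc enc) (fixed_enc enc) (map_prod f g)"
proof -
  obtain tf tg where tf: "computable 1 (\<lambda>xs. tf (xs ! 0))" "\<And>L. tf (enc L) = enc (f L)"
    and tg: "computable 1 (\<lambda>xs. tg (xs ! 0))" "\<And>w. tg (list_encode w) = list_encode (g w)"
    using assms unfolding computable_map_def by blast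
  show ?thesis
  proof (rule computable_mapI)
    show "computable 1 (\<lambda>xs. prod_encode (tf (fst (prod_decode (xs ! 0))), tg (snd (prod_decode (xs ! 0)))))"
      by (intro computable_prod_encode computable_comp1[OF tf(1)] computable_comp1[OF tg(1)]
            computable_fst_prod_decode computable_snd_prod_decode computable_nth) simp_all
  qed (auto simp: fixed_enc_def tf(2) tg(2))
qed

lemma unif_enc_eq: "unif_enc enc (pw, i) = prod_encode (list_encode (map list_encode pw), fixed_enc enc i)"
  by (simp add: unif_enc_def fixed_enc_def)

lemma computable_map_unif_enc:
  assumes "computable_map (fixed_enc enc) (fixed_enc enc) F"
  shows "computable_map (unif_enc enc) (unif_enc enc) (apsnd F)"
proof -
  obtain t where t: "computable 1 (\<lambda>xs. t (xs ! 0))" "\<And>i. t (fixed_enc enc i) = fixed_enc enc (F i)"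
    using assms unfolding computable_map_def by blast
  show ?thesis
  proof (rule computable_mapI)
    show "computable 1 (\<lambda>xs. prod_encode (fst (prod_decode (xs ! 0)), t (snd (prod_decode (xs ! 0)))))"
      by (intro computable_prod_encode computable_comp1[OF t(1)]
            computable_fst_prod_decode computable_snd_prod_decode computable_nth) simp_all
  qed (auto simp: unif_enc_eq t(2))
qed

lemma decidable_on_reduce:
  assumes "decidable_on V enc P" and "computable_map enc' enc F"
    and "\<And>x. x \<in> V' \<Longrightarrow> F x \<in> V \<and> (P (F x) \<longleftrightarrow> P' x)"
  shows "decidable_on V' enc' P'"
proof -
  obtain d where d: "\<And>y. y \<in> V \<Longrightarrow> recf_eval d [enc y] (if P y then 1 else 0)"
    using assms(1) unfolding decidable_on_def by blast
  obtain t ft where t: "\<And>x. t (enc' x) = enc (F x)"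
    and ft: "\<And>xs. length xs = 1 \<Longrightarrow> recf_eval ft xs (t (xs ! 0))"
    using assms(2) unfolding computable_map_def computable_def by blast
  have "recf_eval (Comp d [ft]) [enc' x] (if P' x then 1 else 0)" if "x \<in> V'" for x
  proof (rule recf_eval.comp)
    show "list_all2 (\<lambda>g y. recf_eval g [enc' x] y) [ft] [enc (F x)]"
      using ft[of "[enc' x]"] t by simp
    show "recf_eval d [enc (F x)] (if P' x then 1 else 0)"
      using d[of "F x"] assms(3)[OF that] by simp
  qed
  then show ?thesis unfolding decidable_on_def by blast
qed

lemma decidable_fixed_reduce:
  assumes "decidable_fixed enc m Q"
    and "computable_map enc enc f" and "computable_map list_encode list_encode g"
    and "\<And>L xw. alph_ok n xw \<Longrightarrow> alph_ok m (g xw) \<and> (Q (f L) (g xw) \<longleftrightarrow> R L xw)"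
  shows "decidable_fixed enc n R"
  using assms(1) unfolding decidable_fixed_def
  by (rule decidable_on_reduce[OF _ computable_map_fixed_enc[OF assms(2,3)]]) (auto simp: assms(4))

lemma aut_of_in_auto:
  assumes "aut_words_ok G gens pw"
  shows "aut_of G gens pw \<in> auto G"
proof -
  from assms have "\<exists>\<psi>. \<psi> \<in> auto G \<and> (\<forall>i<length gens. \<psi> (gens ! i) = word_val G gens (pw ! i))"
    unfolding aut_words_ok_def by blast
  then show ?thesis unfolding aut_of_def by (rule someI_ex[THEN conjunct1])
qed

lemma decidable_unif_reduce:
  assumes "decidable_unif G gens enc m Q"
    and "computable_map enc enc f" and "computable_map list_encode list_encode g"
    and "\<And>\<psi> L xw. \<psi> \<in> auto G \<Longrightarrow> alph_ok n xw \<Longrightarrow>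
           alph_ok m (g xw) \<and> (Q \<psi> (f L) (g xw) \<longleftrightarrow> R \<psi> L xw)"
  shows "decidable_unif G gens enc n R"
  using assms(1) unfolding decidable_unif_def
  by (rule decidable_on_reduce[OF _ computable_map_unif_enc[OF computable_map_fixed_enc[OF assms(2,3)]]])
     (auto simp: assms(4)[OF aut_of_in_auto])

section \<open>Finite automata\<close>

lemma alph_ok_Nil [simp]: "alph_ok n []"
  by (simp add: alph_ok_def)

lemma alph_ok_Cons [simp]: "alph_ok n (c # w) \<longleftrightarrow> c < 2 * n \<and> alph_ok n w"
  by (simp add: alph_ok_def)

lemma alph_ok_append [simp]: "alph_ok n (v @ w) \<longleftrightarrow> alph_ok n v \<and> alph_ok n w"
  by (auto simp: alph_ok_def)

lemma alph_ok_Suc: "alph_ok n w \<Longrightarrow> alph_ok (Suc n) w"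
  by (auto simp: alph_ok_def)

definition transition_code :: "nat \<times> nat \<times> nat \<Rightarrow> nat" where
  "transition_code t = prod_encode (fst t, prod_encode (snd t))"

lemma nfa_enc_eq:
  "nfa_enc (T, I, F) = list_encode [list_encode (map transition_code T), list_encode I, list_encode F]"
  by (simp add: nfa_enc_def transition_code_def[abs_def] case_prod_beta')

definition restrict_transitions :: "nat \<Rightarrow> (nat \<times> nat \<times> nat) list \<Rightarrow> (nat \<times> nat \<times> nat) list" where
  "restrict_transitions n T = filter (\<lambda>(p, a, q). a < 2 * n) T"

definition nfa_restrict :: "nat \<Rightarrow> nfa \<Rightarrow> nfa" where
  "nfa_restrict n A = (case A of (T, I, F) \<Rightarrow> (restrict_transitions n T, I, F))"

text \<open>The state Suc (nfa_enc A) is fresh, as every state of A is bounded by the code of A.\<close>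
definition nfa_prefix :: "nat \<Rightarrow> nfa \<Rightarrow> nfa" where
  "nfa_prefix n A = (case A of (T, I, F) \<Rightarrow>
     (map (\<lambda>p. (Suc (nfa_enc A), 2 * n, p)) I @ restrict_transitions n T,
      [Suc (nfa_enc A)], F))"

lemma nfa_run_Nil [simp]: "nfa_run T p [] q \<longleftrightarrow> p = q"
  by (auto intro: nfa_run.intros elim: nfa_run.cases)

lemma nfa_run_Cons [simp]:
  "nfa_run T p (a # w) r \<longleftrightarrow> (\<exists>q. (p, a, q) \<in> set T \<and> nfa_run T q w r)"
  by (auto intro: nfa_run.intros elim: nfa_run.cases)

lemma nfa_run_mono: "nfa_run T p w q \<Longrightarrow> set T \<subseteq> set T' \<Longrightarrow> nfa_run T' p w q"
  by (induction w arbitrary: p) auto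

lemma nfa_run_restrict_transitions:
  "nfa_run (restrict_transitions n T) p w q \<longleftrightarrow> nfa_run T p w q \<and> alph_ok n w"
  by (induction w arbitrary: p) (auto simp: restrict_transitions_def)

lemma nfa_lang_restrict: "nfa_lang (nfa_restrict n A) w \<longleftrightarrow> nfa_lang A w \<and> alph_ok n w"
  by (cases A) (auto simp: nfa_restrict_def nfa_lang_def nfa_run_restrict_transitions)

lemma nfa_states_le_code:
  shows "(p, a, q) \<in> set T \<Longrightarrow> p \<le> nfa_enc (T, I, F) \<and> q \<le> nfa_enc (T, I, F)"
    and "p \<in> set I \<Longrightarrow> p \<le> nfa_enc (T, I, F)"
    and "p \<in> set F \<Longrightarrow> p \<le> nfa_enc (T, I, F)"
proof -
  have parts: "list_encode (map transition_code T) \<le> nfa_enc (T, I, F)"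
    "list_encode I \<le> nfa_enc (T, I, F)" "list_encode F \<le> nfa_enc (T, I, F)"
    unfolding nfa_enc_eq by (rule mem_le_list_encode; simp)+
  show "p \<le> nfa_enc (T, I, F)" if "p \<in> set I"
    using mem_le_list_encode[OF that] parts(2) by linarith
  show "p \<le> nfa_enc (T, I, F)" if "p \<in> set F"
    using mem_le_list_encode[OF that] parts(3) by linarith
  assume "(p, a, q) \<in> set T"
  then have "transition_code (p, a, q) \<in> set (map transition_code T)" by simp
  then have "transition_code (p, a, q) \<le> nfa_enc (T, I, F)"
    using le_trans[OF mem_le_list_encode parts(1)] by blast
  moreover have "p \<le> transition_code (p, a, q)" "q \<le> transition_code (p, a, q)"
    unfolding transition_code_def
    using le_prod_encode_1[of p] le_prod_encode_2[of "prod_encode (a, q)" p] le_prod_encode_2[of q a]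
    by simp_all
  ultimately show "p \<le> nfa_enc (T, I, F) \<and> q \<le> nfa_enc (T, I, F)" by linarith
qed

lemma nfa_run_avoid:
  assumes "\<forall>(p, a, q) \<in> set N. p = s" and "\<forall>(p, a, q) \<in> set T. q \<noteq> s"
  shows "nfa_run (N @ T) q w r \<Longrightarrow> q \<noteq> s \<Longrightarrow> nfa_run T q w r"
proof (induction w arbitrary: q)
  case (Cons a w)
  then obtain q' where "(q, a, q') \<in> set (N @ T)" and run: "nfa_run (N @ T) q' w r" by auto
  with Cons.prems(2) assms(1) have step: "(q, a, q') \<in> set T" by auto
  with assms(2) have "q' \<noteq> s" by auto
  with Cons.IH run have "nfa_run T q' w r" by blast
  with step show ?case by auto
qed simp

lemma nfa_lang_prefix:
  "nfa_lang (nfa_prefix n A) w \<longleftrightarrow> (\<exists>w0. w = 2 * n # w0 \<and> nfa_lang A w0 \<and> alph_ok n w0)"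
proof -
  obtain T I F where A: "A = (T, I, F)" by (cases A)
  define s where "s = Suc (nfa_enc A)"
  let ?Tf = "restrict_transitions n T"
  let ?N = "map (\<lambda>p. (s, 2 * n, p)) I"
  have prefix: "nfa_prefix n A = (?N @ ?Tf, [s], F)"
    unfolding nfa_prefix_def s_def A by simp
  have fresh: "\<And>p a q. (p, a, q) \<in> set T \<Longrightarrow> p \<noteq> s \<and> q \<noteq> s"
    "\<And>p. p \<in> set I \<Longrightarrow> p \<noteq> s" "\<And>p. p \<in> set F \<Longrightarrow> p \<noteq> s"
    unfolding s_def A using nfa_states_le_code[where T = T and I = I and F = F] by (metis Suc_n_not_le_n)+
  show ?thesis
  proof
    assume "nfa_lang (nfa_prefix n A) w"
    then obtain r where run: "nfa_run (?N @ ?Tf) s w r" and r: "r \<in> set F"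
      unfolding prefix nfa_lang_def by auto
    obtain a w0 where w: "w = a # w0"
      using run r fresh(3) by (cases w) auto
    then obtain q where q: "(s, a, q) \<in> set (?N @ ?Tf)" and run0: "nfa_run (?N @ ?Tf) q w0 r"
      using run by auto
    have "(s, a, q) \<notin> set ?Tf" using fresh(1)[of s a q] by (auto simp: restrict_transitions_def)
    with q have "a = 2 * n" and "q \<in> set I" by auto
    moreover have "nfa_run ?Tf q w0 r"
    proof (rule nfa_run_avoid[where s = s, OF _ _ run0])
      show "\<forall>(p, a, q) \<in> set ?N. p = s" by auto
      show "\<forall>(p, a, q) \<in> set ?Tf. q \<noteq> s" using fresh(1) by (auto simp: restrict_transitions_def)
      show "q \<noteq> s" using fresh(2) \<open>q \<in> set I\<close> by blast
    qed
    ultimately show "\<exists>w0. w = 2 * n # w0 \<and> nfa_lang A w0 \<and> alph_ok n w0"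
      using w r unfolding A nfa_lang_def nfa_run_restrict_transitions by auto
  next
    assume "\<exists>w0. w = 2 * n # w0 \<and> nfa_lang A w0 \<and> alph_ok n w0"
    then obtain w0 p r where w: "w = 2 * n # w0" and p: "p \<in> set I" and r: "r \<in> set F"
      and run: "nfa_run ?Tf p w0 r"
      by (auto simp: A nfa_lang_def nfa_run_restrict_transitions)
    have "nfa_run (?N @ ?Tf) p w0 r" using run by (rule nfa_run_mono) auto
    moreover have "(s, 2 * n, p) \<in> set (?N @ ?Tf)" using p by auto
    ultimately have "nfa_run (?N @ ?Tf) s w r" unfolding w by auto
    then show "nfa_lang (nfa_prefix n A) w"
      unfolding prefix nfa_lang_def using r by auto
  qed
qed

definition nfa_restrict_code :: "nat \<Rightarrow> nat \<Rightarrow> nat" where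
  "nfa_restrict_code n c = list_code_Cons
     (list_encode (filter (\<lambda>e. fst (prod_decode (snd (prod_decode e))) < 2 * n)
       (list_decode (list_code_hd c))))
     (list_code_tl c)"

definition nfa_prefix_code :: "nat \<Rightarrow> nat \<Rightarrow> nat" where
  "nfa_prefix_code n c = list_code_Cons
     (list_encode (map (\<lambda>e. prod_encode (Suc c, prod_encode (2 * n, e)))
         (list_decode (list_code_hd (list_code_tl c)))
       @ list_decode (list_code_hd (nfa_restrict_code n c))))
     (list_code_Cons (list_code_Cons (Suc c) 0) (list_code_tl (list_code_tl c)))"

lemma nfa_restrict_code_nfa_enc: "nfa_restrict_code n (nfa_enc A) = nfa_enc (nfa_restrict n A)"
  by (cases A)
     (simp add: nfa_restrict_code_def nfa_restrict_def restrict_transitions_def nfa_enc_eq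
        filter_map comp_def transition_code_def list_code_Cons_def case_prod_beta')

lemma nfa_prefix_code_nfa_enc: "nfa_prefix_code n (nfa_enc A) = nfa_enc (nfa_prefix n A)"
proof -
  obtain T I F where A: "A = (T, I, F)" by (cases A)
  let ?c = "nfa_enc A"
  have restrict: "list_code_hd (nfa_restrict_code n ?c) =
      list_encode (map transition_code (restrict_transitions n T))"
    unfolding nfa_restrict_code_nfa_enc by (simp add: A nfa_restrict_def nfa_enc_eq)
  have "list_code_hd (list_code_tl ?c) = list_encode I"
    and "list_code_tl (list_code_tl ?c) = list_encode [list_encode F]"
    unfolding A nfa_enc_eq by simp_all
  with restrict show ?thesis
    unfolding nfa_prefix_code_def
    by (simp add: nfa_prefix_def A nfa_enc_eq[of "_ @ _"] comp_def transition_code_def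
        list_code_Cons_def)
qed

lemma computable_nfa_restrict_code:
  "computable k a \<Longrightarrow> computable k (\<lambda>xs. nfa_restrict_code n (a xs))"
  unfolding nfa_restrict_code_def
  by (intro computable_list_code_Cons computable_filter computable_list_code_hd
        computable_list_code_tl computable_of_bool_less computable_fst_prod_decode
        computable_snd_prod_decode computable_nth computable_const) simp_all

lemma computable_nfa_prefix_code:
  assumes "computable k a"
  shows "computable k (\<lambda>xs. nfa_prefix_code n (a xs))"
proof -
  let ?new = "\<lambda>s e. prod_encode (s, prod_encode (2 * n, e))"
  have new: "computable 2 (\<lambda>ys. ?new (ys ! 0) (ys ! 1))"
    by (intro computable_prod_encode computable_nth computable_const) simp_all
  have "computable k (\<lambda>xs. list_encode (map (?new (Suc (a xs)))
      (list_decode (list_code_hd (list_code_tl (a xs))))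
      @ list_decode (list_code_hd (nfa_restrict_code n (a xs)))))"
    using assms
    by (intro computable_map_append[where f = ?new, OF new] computable_Suc computable_list_code_hd
        computable_list_code_tl computable_nfa_restrict_code)
  then show ?thesis
    unfolding nfa_prefix_code_def using assms
    by (intro computable_list_code_Cons computable_Suc computable_list_code_tl computable_const)
qed

lemma computable_map_nfa_restrict: "computable_map nfa_enc nfa_enc (nfa_restrict n)"
  by (rule computable_mapI[OF computable_nfa_restrict_code[OF computable_nth]])
     (simp_all add: nfa_restrict_code_nfa_enc)

lemma computable_map_nfa_prefix: "computable_map nfa_enc nfa_enc (nfa_prefix n)"
  by (rule computable_mapI[OF computable_nfa_prefix_code[OF computable_nth]])
     (simp_all add: nfa_prefix_code_nfa_enc)

section \<open>Context-free grammars\<close>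

definition production_code :: "nat \<times> (nat + nat) list \<Rightarrow> nat" where
  "production_code pr = prod_encode (fst pr, list_encode (map sym_enc (snd pr)))"

lemma cfg_enc_eq: "cfg_enc C = prod_encode (list_encode (map production_code (fst C)), snd C)"
  by (simp add: cfg_enc_def production_code_def[abs_def] case_prod_beta')

definition restrict_productions :: "nat \<Rightarrow> (nat \<times> (nat + nat) list) list \<Rightarrow> (nat \<times> (nat + nat) list) list" where
  "restrict_productions n P = filter (\<lambda>(N, rhs). \<forall>a. Inl a \<in> set rhs \<longrightarrow> a < 2 * n) P"

definition cfg_restrict :: "nat \<Rightarrow> cfg \<Rightarrow> cfg" where
  "cfg_restrict n C = (restrict_productions n (fst C), snd C)"

text \<open>The nonterminal Suc (cfg_enc C) is fresh, as every nonterminal of C is bounded by the code of C.\<close>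
definition cfg_prefix :: "nat \<Rightarrow> cfg \<Rightarrow> cfg" where
  "cfg_prefix n C =
     ((Suc (cfg_enc C), [Inl (2 * n), Inr (snd C)]) # restrict_productions n (fst C), Suc (cfg_enc C))"

lemma cfg_gen_mono:
  assumes "set P \<subseteq> set Q"
  shows "cfg_gen P N w \<Longrightarrow> cfg_gen Q N w" and "cfg_genseq P r w \<Longrightarrow> cfg_genseq Q r w"
  by (induction rule: cfg_gen_cfg_genseq.inducts)
     (use assms in \<open>auto intro: cfg_gen_cfg_genseq.intros\<close>)

lemma cfg_gen_restrict_productions_sound:
  assumes "Pf = restrict_productions n P"
  shows "cfg_gen Pf N w \<Longrightarrow> cfg_gen P N w \<and> alph_ok n w"
    and "cfg_genseq Pf r w \<Longrightarrow> \<forall>a. Inl a \<in> set r \<longrightarrow> a < 2 * n \<Longrightarrow>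
           cfg_genseq P r w \<and> alph_ok n w"
proof (induction rule: cfg_gen_cfg_genseq.inducts)
  case (1 N rhs w)
  then show ?case by (auto simp: assms restrict_productions_def intro: cfg_gen_cfg_genseq.intros)
qed (auto intro: cfg_gen_cfg_genseq.intros)

lemma cfg_gen_restrict_productions_complete:
  shows "cfg_gen P N w \<Longrightarrow> alph_ok n w \<Longrightarrow> cfg_gen (restrict_productions n P) N w"
    and "cfg_genseq P r w \<Longrightarrow> alph_ok n w \<Longrightarrow>
           cfg_genseq (restrict_productions n P) r w \<and> (\<forall>a. Inl a \<in> set r \<longrightarrow> a < 2 * n)"
proof (induction rule: cfg_gen_cfg_genseq.inducts)
  case (1 N rhs w)
  then show ?case by (auto simp: restrict_productions_def intro: cfg_gen_cfg_genseq.intros)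
qed (auto intro: cfg_gen_cfg_genseq.intros)

lemma cfg_gen_restrict_productions:
  "cfg_gen (restrict_productions n P) N w \<longleftrightarrow> cfg_gen P N w \<and> alph_ok n w"
  using cfg_gen_restrict_productions_sound(1)[OF refl] cfg_gen_restrict_productions_complete(1)
  by blast

lemma cfg_lang_restrict: "cfg_lang (cfg_restrict n C) w \<longleftrightarrow> cfg_lang C w \<and> alph_ok n w"
  by (simp add: cfg_lang_def cfg_restrict_def cfg_gen_restrict_productions)

lemma cfg_symbols_le_code:
  shows "(N, rhs) \<in> set P \<Longrightarrow> N \<le> cfg_enc (P, S)"
    and "(N, rhs) \<in> set P \<Longrightarrow> Inr M \<in> set rhs \<Longrightarrow> M \<le> cfg_enc (P, S)"
    and "S \<le> cfg_enc (P, S)"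
proof -
  have productions: "list_encode (map production_code P) \<le> cfg_enc (P, S)"
    by (simp add: cfg_enc_eq le_prod_encode_1)
  show "S \<le> cfg_enc (P, S)" by (simp add: cfg_enc_eq le_prod_encode_2)
  assume "(N, rhs) \<in> set P"
  then have "production_code (N, rhs) \<in> set (map production_code P)" by simp
  then have "production_code (N, rhs) \<le> cfg_enc (P, S)"
    using le_trans[OF mem_le_list_encode productions] by blast
  then have code: "prod_encode (N, list_encode (map sym_enc rhs)) \<le> cfg_enc (P, S)"
    by (simp add: production_code_def)
  then show "N \<le> cfg_enc (P, S)"
    using le_trans[OF le_prod_encode_1] by blast
  assume "Inr M \<in> set rhs"
  then have "sym_enc (Inr M) \<le> list_encode (map sym_enc rhs)"
    by (intro mem_le_list_encode) simp
  then show "M \<le> cfg_enc (P, S)"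
    using le_trans[OF le_prod_encode_2 code] by (simp add: sym_enc_def)
qed

lemma cfg_gen_avoid:
  assumes "P' = (S', x) # P" and "\<forall>(N, rhs) \<in> set P. N \<noteq> S' \<and> Inr S' \<notin> set rhs"
  shows "cfg_gen P' N w \<Longrightarrow> N \<noteq> S' \<Longrightarrow> cfg_gen P N w"
    and "cfg_genseq P' r w \<Longrightarrow> Inr S' \<notin> set r \<Longrightarrow> cfg_genseq P r w"
proof (induction rule: cfg_gen_cfg_genseq.inducts)
  case (1 N rhs w)
  then have "(N, rhs) \<in> set P" using assms(1) by auto
  with 1 assms(2) show ?case by (auto intro: cfg_gen_cfg_genseq.intros)
qed (auto intro: cfg_gen_cfg_genseq.intros)

lemma cfg_lang_prefix:
  "cfg_lang (cfg_prefix n C) w \<longleftrightarrow> (\<exists>w0. w = 2 * n # w0 \<and> cfg_lang C w0 \<and> alph_ok n w0)"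
proof -
  obtain P S where C: "C = (P, S)" by (cases C)
  define S' where "S' = Suc (cfg_enc C)"
  let ?Pf = "restrict_productions n P"
  let ?P' = "(S', [Inl (2 * n), Inr S]) # ?Pf"
  have prefix: "cfg_prefix n C = (?P', S')"
    unfolding cfg_prefix_def S'_def C by simp
  have fresh: "\<forall>(N, rhs) \<in> set ?Pf. N \<noteq> S' \<and> Inr S' \<notin> set rhs" and "S \<noteq> S'"
    unfolding S'_def C restrict_productions_def
    using cfg_symbols_le_code[where P = P and S = S] by (fastforce simp: not_less_eq_eq)+
  show ?thesis
  proof
    assume "cfg_lang (cfg_prefix n C) w"
    then have "cfg_gen ?P' S' w" by (simp add: prefix cfg_lang_def)
    then obtain rhs where rhs: "(S', rhs) \<in> set ?P'" and gen: "cfg_genseq ?P' rhs w"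
      by (cases rule: cfg_gen.cases) auto
    from rhs fresh(1) have "rhs = [Inl (2 * n), Inr S]" by auto
    with gen obtain w0 where w: "w = 2 * n # w0" and "cfg_gen ?P' S w0"
      by (auto elim!: cfg_genseq.cases)
    then have "cfg_gen ?Pf S w0"
      using cfg_gen_avoid(1)[OF refl fresh(1)] \<open>S \<noteq> S'\<close> by blast
    with w show "\<exists>w0. w = 2 * n # w0 \<and> cfg_lang C w0 \<and> alph_ok n w0"
      by (simp add: C cfg_lang_def cfg_gen_restrict_productions)
  next
    assume "\<exists>w0. w = 2 * n # w0 \<and> cfg_lang C w0 \<and> alph_ok n w0"
    then obtain w0 where w: "w = 2 * n # w0" and "cfg_gen ?Pf S w0"
      by (auto simp: C cfg_lang_def cfg_gen_restrict_productions)
    then have "cfg_gen ?P' S w0" using cfg_gen_mono(1)[of ?Pf ?P'] by auto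
    then have "cfg_genseq ?P' [Inl (2 * n), Inr S] w"
      unfolding w using cfg_gen_cfg_genseq.intros(2,3,4)[of ?P'] by fastforce
    then show "cfg_lang (cfg_prefix n C) w"
      by (auto simp: prefix cfg_lang_def intro: cfg_gen_cfg_genseq.intros(1))
  qed
qed

text \<open>The terminal a is coded by 2 a, so the bound a < 2 n reads d < 4 n on even codes d.\<close>
definition cfg_restrict_code :: "nat \<Rightarrow> nat \<Rightarrow> nat" where
  "cfg_restrict_code n c = prod_encode
     (list_encode (filter
        (\<lambda>e. \<forall>d\<in>set (list_decode (snd (prod_decode e))). d mod 2 = 0 \<longrightarrow> d < 4 * n)
        (list_decode (fst (prod_decode c)))),
      snd (prod_decode c))"

definition cfg_prefix_code :: "nat \<Rightarrow> nat \<Rightarrow> nat" where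
  "cfg_prefix_code n c = prod_encode
     (list_code_Cons
        (prod_encode (Suc c, list_code_Cons (4 * n) (list_code_Cons (2 * snd (prod_decode c) + 1) 0)))
        (fst (prod_decode (cfg_restrict_code n c))),
      Suc c)"

lemma restrict_productions_code:
  "filter (\<lambda>e. \<forall>d\<in>set (list_decode (snd (prod_decode e))). d mod 2 = 0 \<longrightarrow> d < 4 * n)
     (map production_code P) = map production_code (restrict_productions n P)"
proof -
  have "(\<forall>d\<in>set (map sym_enc rhs). d mod 2 = 0 \<longrightarrow> d < 4 * n) \<longleftrightarrow>
      (\<forall>a. Inl a \<in> set rhs \<longrightarrow> a < 2 * n)"
    for rhs :: "(nat + nat) list"
    by (auto simp: sym_enc_def split: sum.splits)
  then show ?thesis
    by (simp add: restrict_productions_def filter_map comp_def production_code_def case_prod_beta')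
qed

lemma cfg_restrict_code_cfg_enc: "cfg_restrict_code n (cfg_enc C) = cfg_enc (cfg_restrict n C)"
  by (simp add: cfg_restrict_code_def cfg_restrict_def cfg_enc_eq restrict_productions_code)

lemma cfg_prefix_code_cfg_enc: "cfg_prefix_code n (cfg_enc C) = cfg_enc (cfg_prefix n C)"
proof -
  have "fst (prod_decode (cfg_restrict_code n (cfg_enc C))) =
      list_encode (map production_code (restrict_productions n (fst C)))"
    unfolding cfg_restrict_code_cfg_enc by (simp add: cfg_restrict_def cfg_enc_eq)
  moreover have "snd (prod_decode (cfg_enc C)) = snd C" by (simp add: cfg_enc_eq)
  ultimately show ?thesis
    unfolding cfg_prefix_code_def
    by (simp add: cfg_prefix_def cfg_enc_eq[of "(_ # _, _)"] production_code_def sym_enc_def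
        list_code_Cons_def)
qed

lemma computable_cfg_restrict_code:
  "computable k a \<Longrightarrow> computable k (\<lambda>xs. cfg_restrict_code n (a xs))"
  unfolding cfg_restrict_code_def
  by (intro computable_prod_encode computable_filter computable_list_all computable_of_bool_imp
        computable_of_bool_eq_0 computable_mod_2 computable_of_bool_less computable_fst_prod_decode
        computable_snd_prod_decode computable_nth computable_const) simp_all

lemma computable_cfg_prefix_code:
  "computable k a \<Longrightarrow> computable k (\<lambda>xs. cfg_prefix_code n (a xs))"
  unfolding cfg_prefix_code_def
  by (intro computable_prod_encode computable_list_code_Cons computable_fst_prod_decode
        computable_cfg_restrict_code computable_add computable_mult computable_snd_prod_decode
        computable_Suc computable_const)

lemma computable_map_cfg_restrict: "computable_map cfg_enc cfg_enc (cfg_restrict n)"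
  by (rule computable_mapI[OF computable_cfg_restrict_code[OF computable_nth]])
     (simp_all add: cfg_restrict_code_cfg_enc)

lemma computable_map_cfg_prefix: "computable_map cfg_enc cfg_enc (cfg_prefix n)"
  by (rule computable_mapI[OF computable_cfg_prefix_code[OF computable_nth]])
     (simp_all add: cfg_prefix_code_cfg_enc)

section \<open>Automorphisms and twisted conjugacy\<close>

lemma auto_imp_iso: "\<psi> \<in> auto G \<Longrightarrow> \<psi> \<in> iso G G"
  by (auto simp: auto_def iso_def Bij_def)

lemma funpow_iso: "f \<in> iso G G \<Longrightarrow> f ^^ m \<in> iso G G"
proof (induction m)
  case 0
  show ?case by (simp add: iso_set_refl)
next
  case (Suc m)
  then show ?case using iso_set_trans[of "f ^^ m" G G f G] by (simp only: funpow.simps(2))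
qed

context group
begin

lemma iso_closed: "h \<in> iso G G \<Longrightarrow> x \<in> carrier G \<Longrightarrow> h x \<in> carrier G"
  by (auto simp: iso_def hom_def)

lemma iso_mult:
  "h \<in> iso G G \<Longrightarrow> x \<in> carrier G \<Longrightarrow> y \<in> carrier G \<Longrightarrow> h (x \<otimes> y) = h x \<otimes> h y"
  by (rule hom_mult[OF iso_imp_homomorphism])

lemma iso_inv: "h \<in> iso G G \<Longrightarrow> x \<in> carrier G \<Longrightarrow> h (inv x) = inv (h x)"
  by (intro group_hom.hom_inv)
     (simp_all add: group_hom_def group_hom_axioms_def iso_imp_homomorphism)

lemma letter_val_closed:
  assumes "set gens \<subseteq> carrier G" and "c < 2 * length gens"
  shows "letter_val G gens c \<in> carrier G"
proof -
  have "gens ! (c div 2) \<in> carrier G" using assms by auto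
  then show ?thesis by (simp add: letter_val_def)
qed

lemma word_val_closed:
  assumes "set gens \<subseteq> carrier G" and "alph_ok (length gens) w"
  shows "word_val G gens w \<in> carrier G"
  using assms(2) by (induction w) (simp_all add: word_val_def letter_val_closed[OF assms(1)])

end

locale group_automorphism = group G for G (structure) +
  fixes \<psi> :: "'a \<Rightarrow> 'a"
  assumes aut: "\<psi> \<in> auto G"
begin

abbreviation \<iota> :: "'a \<Rightarrow> 'a" where
  "\<iota> \<equiv> inv_into (carrier G) \<psi>"

lemma psi_iso: "\<psi> \<in> iso G G"
  using aut by (rule auto_imp_iso)

lemma iota_iso: "\<iota> \<in> iso G G"
  using psi_iso by (rule iso_set_sym)

lemma psi_closed: "x \<in> carrier G \<Longrightarrow> \<psi> x \<in> carrier G"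
  using psi_iso by (rule iso_closed)

lemma iota_closed: "x \<in> carrier G \<Longrightarrow> \<iota> x \<in> carrier G"
  using iota_iso by (rule iso_closed)

lemma psi_iota: "x \<in> carrier G \<Longrightarrow> \<psi> (\<iota> x) = x"
  using psi_iso by (intro f_inv_into_f) (auto simp: iso_iff)

lemma iota_psi: "x \<in> carrier G \<Longrightarrow> \<iota> (\<psi> x) = x"
  using psi_iso by (intro inv_into_f_f) (auto simp: iso_iff)

lemma aut_pow_iso: "aut_pow G \<psi> k \<in> iso G G"
  unfolding aut_pow_def using funpow_iso[OF psi_iso] funpow_iso[OF iota_iso] by simp

lemma aut_pow_closed: "x \<in> carrier G \<Longrightarrow> aut_pow G \<psi> k x \<in> carrier G"
  using aut_pow_iso by (rule iso_closed)

lemma aut_pow_minus_one: "aut_pow G \<psi> (-1) = \<iota>"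
  by (simp add: aut_pow_def)

lemma psi_aut_pow: "x \<in> carrier G \<Longrightarrow> \<psi> (aut_pow G \<psi> k x) = aut_pow G \<psi> k (\<psi> x)"
proof (cases "0 \<le> k")
  case True
  then show ?thesis by (simp add: aut_pow_def funpow_swap1)
next
  case False
  have "\<psi> ((\<iota> ^^ m) x) = (\<iota> ^^ m) (\<psi> x)" if "x \<in> carrier G" for m
  proof (induction m)
    case (Suc m)
    have "(\<iota> ^^ m) x \<in> carrier G" using funpow_iso[OF iota_iso] that by (rule iso_closed)
    then have "\<psi> ((\<iota> ^^ Suc m) x) = (\<iota> ^^ m) (\<iota> (\<psi> x))" by (simp add: psi_iota iota_psi that)
    then show ?case by (simp add: funpow_Suc_right del: funpow.simps)
  qed simp
  with False show "x \<in> carrier G \<Longrightarrow> ?thesis" by (simp add: aut_pow_def)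
qed

definition twisted_conj :: "'a \<Rightarrow> 'a \<Rightarrow> bool" where
  "twisted_conj x y \<longleftrightarrow> (\<exists>u\<in>carrier G. x = inv (\<psi> u) \<otimes> y \<otimes> u)"

lemma twisted_conj_refl: "x \<in> carrier G \<Longrightarrow> twisted_conj x x"
  unfolding twisted_conj_def
  using hom_one[OF iso_imp_homomorphism[OF psi_iso] is_group is_group] by (intro bexI[of _ \<one>]) simp_all

lemma twisted_conj_trans:
  assumes "twisted_conj x y" and "twisted_conj y z" and "z \<in> carrier G"
  shows "twisted_conj x z"
proof -
  obtain u v where u: "u \<in> carrier G" "x = inv (\<psi> u) \<otimes> y \<otimes> u"
    and v: "v \<in> carrier G" "y = inv (\<psi> v) \<otimes> z \<otimes> v"
    using assms(1,2) unfolding twisted_conj_def by blast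
  have "x = inv (\<psi> (v \<otimes> u)) \<otimes> z \<otimes> (v \<otimes> u)"
    using u v assms(3) by (simp add: iso_mult[OF psi_iso] psi_closed inv_mult_group m_assoc)
  then show ?thesis unfolding twisted_conj_def using u(1) v(1) by blast
qed

lemma twisted_conj_psi: "x \<in> carrier G \<Longrightarrow> twisted_conj (\<psi> x) x"
  unfolding twisted_conj_def
  by (intro bexI[of _ "inv x"]) (simp_all add: iso_inv[OF psi_iso] psi_closed m_assoc)

lemma twisted_conj_iota: "x \<in> carrier G \<Longrightarrow> twisted_conj (\<iota> x) x"
  unfolding twisted_conj_def
  by (intro bexI[of _ "\<iota> x"]) (simp_all add: psi_iota iota_closed m_assoc[symmetric])

lemma twisted_conj_aut_pow:
  assumes x: "x \<in> carrier G"
  shows "twisted_conj (aut_pow G \<psi> k x) x"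
proof -
  have "twisted_conj ((f ^^ m) x) x" if f: "f \<in> {\<psi>, \<iota>}" for f m
  proof (induction m)
    case 0
    show ?case using twisted_conj_refl[OF x] by simp
  next
    case (Suc m)
    have "(f ^^ m) x \<in> carrier G"
      using f funpow_iso[OF psi_iso] funpow_iso[OF iota_iso] x by (auto intro: iso_closed)
    then have "twisted_conj ((f ^^ Suc m) x) ((f ^^ m) x)"
      using f twisted_conj_psi twisted_conj_iota by auto
    then show ?case using Suc x by (rule twisted_conj_trans)
  qed
  then show ?thesis unfolding aut_pow_def by simp
qed

end

section \<open>Conjugacy in the semidirect product\<close>

lemma aut_pow_0 [simp]: "aut_pow G \<phi> 0 = id"
  by (simp add: aut_pow_def)

lemma sd_word_val_Cons:
  "sd_word_val G \<phi> gens (c # w) = sd_mult G \<phi> (sd_letter_val G gens c) (sd_word_val G \<phi> gens w)"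
  by (simp add: sd_word_val_def)

lemma sd_word_val_G_word:
  "alph_ok (length gens) w \<Longrightarrow> sd_word_val G \<phi> gens w = (word_val G gens w, 0)"
  by (induction w) (simp_all add: sd_word_val_def word_val_def sd_letter_val_def sd_mult_def)

context group_automorphism
begin

lemma sd_word_val_t_word:
  assumes "set gens \<subseteq> carrier G" and "alph_ok (length gens) w"
  shows "sd_word_val G \<psi> gens (2 * length gens # w) = (\<iota> (word_val G gens w), 1)"
  using iota_closed[OF word_val_closed[OF assms]]
  by (simp add: sd_word_val_Cons sd_word_val_G_word[OF assms(2)] sd_letter_val_def sd_mult_def
      aut_pow_minus_one)

lemma sd_conj:
  assumes "x \<in> carrier G" and "g \<in> carrier G"
  shows "sd_mult G \<psi> (sd_inv G \<psi> (g, k)) (sd_mult G \<psi> (x, m) (g, k)) =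
    (inv (aut_pow G \<psi> k g) \<otimes> aut_pow G \<psi> k x \<otimes> aut_pow G \<psi> k (aut_pow G \<psi> (- m) g), m)"
  using assms
  by (simp add: sd_mult_def sd_inv_def iso_mult[OF aut_pow_iso] iso_inv[OF aut_pow_iso]
      aut_pow_closed m_assoc)

lemma GCP_sd_iff_GBrCP:
  assumes gens: "set gens \<subseteq> carrier G" and xw: "alph_ok (length gens) xw"
    and lang: "\<And>w. lang L' w \<longleftrightarrow> lang L w \<and> alph_ok (length gens) w"
  shows "GCP_sd_prop lang G gens \<psi> L' xw \<longleftrightarrow> GBrCP_prop lang G gens \<psi> L xw"
proof
  let ?x = "word_val G gens xw"
  let ?P = "aut_pow G \<psi>"
  have x: "?x \<in> carrier G" using gens xw by (rule word_val_closed)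
  assume "GCP_sd_prop lang G gens \<psi> L' xw"
  then obtain w g k where w: "lang L w" "alph_ok (length gens) w" and g: "g \<in> carrier G"
    and eq: "sd_word_val G \<psi> gens w =
      sd_mult G \<psi> (sd_inv G \<psi> (g, k)) (sd_mult G \<psi> (sd_word_val G \<psi> gens xw) (g, k))"
    unfolding GCP_sd_prop_def lang by auto
  have "word_val G gens w = inv (?P k g) \<otimes> ?P k ?x \<otimes> ?P k g"
    using eq by (simp add: sd_word_val_G_word w(2) xw sd_conj[OF x g])
  then show "GBrCP_prop lang G gens \<psi> L xw"
    unfolding GBrCP_prop_def using w aut_pow_closed[OF g] by blast
next
  let ?x = "word_val G gens xw"
  let ?P = "aut_pow G \<psi>"
  have x: "?x \<in> carrier G" using gens xw by (rule word_val_closed)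
  assume "GBrCP_prop lang G gens \<psi> L xw"
  then obtain k w z where w: "lang L w" "alph_ok (length gens) w" and z: "z \<in> carrier G"
    and eq: "word_val G gens w = inv z \<otimes> ?P k ?x \<otimes> z"
    unfolding GBrCP_prop_def by blast
  obtain g where g: "g \<in> carrier G" and z_eq: "z = ?P k g"
    using z aut_pow_iso[of k] unfolding iso_iff by blast
  have "sd_word_val G \<psi> gens w =
      sd_mult G \<psi> (sd_inv G \<psi> (g, k)) (sd_mult G \<psi> (sd_word_val G \<psi> gens xw) (g, k))"
    using eq by (simp add: sd_word_val_G_word w(2) xw sd_conj[OF x g] z_eq)
  then show "GCP_sd_prop lang G gens \<psi> L' xw"
    unfolding GCP_sd_prop_def lang using w g alph_ok_Suc[OF w(2)] by blast
qed

lemma GCP_sd_iff_GTCP: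
  assumes gens: "set gens \<subseteq> carrier G" and xw: "alph_ok (length gens) xw"
    and lang: "\<And>w. lang L' w \<longleftrightarrow>
      (\<exists>w0. w = 2 * length gens # w0 \<and> lang L w0 \<and> alph_ok (length gens) w0)"
  shows "GCP_sd_prop lang G gens \<psi> L' (2 * length gens # xw) \<longleftrightarrow> GTCP_prop lang G gens \<psi> L xw"
proof
  let ?x = "word_val G gens xw"
  let ?P = "aut_pow G \<psi>"
  have x: "?x \<in> carrier G" using gens xw by (rule word_val_closed)
  assume "GCP_sd_prop lang G gens \<psi> L' (2 * length gens # xw)"
  then obtain w0 g k where w0: "lang L w0" "alph_ok (length gens) w0" and g: "g \<in> carrier G"
    and eq: "\<iota> (word_val G gens w0) = inv (?P k g) \<otimes> ?P k (\<iota> ?x) \<otimes> ?P k (\<iota> g)"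
    unfolding GCP_sd_prop_def lang
    by (auto simp: sd_word_val_t_word[OF gens] xw sd_conj[OF iota_closed[OF x]] aut_pow_minus_one)
  let ?v = "word_val G gens w0"
  have v: "?v \<in> carrier G" using gens w0(2) by (rule word_val_closed)
  text \<open>Applying \<psi> to eq turns the conjugation in the semidirect product into a twisted
    conjugation of ?P k ?x by ?P k g.\<close>
  have "?v = \<psi> (\<iota> ?v)" using psi_iota[OF v] by simp
  also have "\<dots> = inv (\<psi> (?P k g)) \<otimes> ?P k ?x \<otimes> ?P k g"
    unfolding eq using g x
    by (simp add: iso_mult[OF psi_iso] iso_inv[OF psi_iso] aut_pow_closed iota_closed
        psi_aut_pow psi_iota)
  finally have "twisted_conj ?v (?P k ?x)"
    unfolding twisted_conj_def using aut_pow_closed[OF g] by blast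
  then have "twisted_conj ?v ?x"
    using twisted_conj_aut_pow[OF x] x by (rule twisted_conj_trans)
  then show "GTCP_prop lang G gens \<psi> L xw"
    unfolding GTCP_prop_def twisted_conj_def using w0 by blast
next
  let ?x = "word_val G gens xw"
  have x: "?x \<in> carrier G" using gens xw by (rule word_val_closed)
  assume "GTCP_prop lang G gens \<psi> L xw"
  then obtain w0 z where w0: "lang L w0" "alph_ok (length gens) w0" and z: "z \<in> carrier G"
    and eq: "word_val G gens w0 = inv (\<psi> z) \<otimes> ?x \<otimes> z"
    unfolding GTCP_prop_def by blast
  have "\<iota> (word_val G gens w0) = inv z \<otimes> \<iota> ?x \<otimes> \<iota> z"
    unfolding eq using x z psi_closed[OF z]
    by (simp add: iso_mult[OF iota_iso] iso_inv[OF iota_iso] iota_psi)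
  then have "sd_word_val G \<psi> gens (2 * length gens # w0) = sd_mult G \<psi> (sd_inv G \<psi> (z, 0))
      (sd_mult G \<psi> (sd_word_val G \<psi> gens (2 * length gens # xw)) (z, 0))"
    by (simp add: sd_word_val_t_word[OF gens] w0(2) xw sd_conj[OF iota_closed[OF x] z]
        aut_pow_minus_one)
  then show "GCP_sd_prop lang G gens \<psi> L' (2 * length gens # xw)"
    unfolding GCP_sd_prop_def lang using w0 z alph_ok_Suc[OF w0(2)] by fastforce
qed

end

lemma group_automorphismI: "group G \<Longrightarrow> \<psi> \<in> auto G \<Longrightarrow> group_automorphism G \<psi>"
  by (simp add: group_automorphism_def group_automorphism_axioms_def)

lemma GBrCP_GTCP_reduce_to_GCP_sd:
  assumes grp: "group G" and gens: "set gens \<subseteq> carrier G" and \<phi>: "\<phi> \<in> auto G"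
    and restrict: "\<And>L w. lang (restr L) w \<longleftrightarrow> lang L w \<and> alph_ok (length gens) w"
    and restr: "computable_map enc enc restr"
    and prefix: "\<And>L w. lang (pref L) w \<longleftrightarrow>
      (\<exists>w0. w = 2 * length gens # w0 \<and> lang L w0 \<and> alph_ok (length gens) w0)"
    and pref: "computable_map enc enc pref"
  shows "(decidable_fixed enc (Suc (length gens)) (GCP_sd_prop lang G gens \<phi>) \<longrightarrow>
        decidable_fixed enc (length gens) (GBrCP_prop lang G gens \<phi>) \<and>
        decidable_fixed enc (length gens) (GTCP_prop lang G gens \<phi>))
   \<and> (decidable_unif G gens enc (Suc (length gens)) (GCP_sd_prop lang G gens) \<longrightarrow>
        decidable_unif G gens enc (length gens) (GBrCP_prop lang G gens) \<and>
        decidable_unif G gens enc (length gens) (GTCP_prop lang G gens))"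
proof -
  let ?n = "length gens"
  have Br: "alph_ok (Suc ?n) (id xw) \<and>
      (GCP_sd_prop lang G gens \<psi> (restr L) (id xw) \<longleftrightarrow> GBrCP_prop lang G gens \<psi> L xw)"
    if "\<psi> \<in> auto G" and xw: "alph_ok ?n xw" for \<psi> L xw
  proof -
    interpret group_automorphism G \<psi> using grp that(1) by (rule group_automorphismI)
    show ?thesis using GCP_sd_iff_GBrCP[OF gens xw restrict[of L]] alph_ok_Suc[OF xw] by simp
  qed
  have Tc: "alph_ok (Suc ?n) (2 * ?n # xw) \<and>
      (GCP_sd_prop lang G gens \<psi> (pref L) (2 * ?n # xw) \<longleftrightarrow> GTCP_prop lang G gens \<psi> L xw)"
    if "\<psi> \<in> auto G" and xw: "alph_ok ?n xw" for \<psi> L xw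
  proof -
    interpret group_automorphism G \<psi> using grp that(1) by (rule group_automorphismI)
    show ?thesis using GCP_sd_iff_GTCP[OF gens xw prefix[of L]] alph_ok_Suc[OF xw] by simp
  qed
  show ?thesis
  proof (intro conjI impI)
    assume fixed: "decidable_fixed enc (Suc ?n) (GCP_sd_prop lang G gens \<phi>)"
    show "decidable_fixed enc ?n (GBrCP_prop lang G gens \<phi>)"
      by (rule decidable_fixed_reduce[OF fixed restr computable_map_id Br[OF \<phi>]])
    show "decidable_fixed enc ?n (GTCP_prop lang G gens \<phi>)"
      by (rule decidable_fixed_reduce[OF fixed pref computable_map_Cons Tc[OF \<phi>]])
  next
    assume unif: "decidable_unif G gens enc (Suc ?n) (GCP_sd_prop lang G gens)"
    show "decidable_unif G gens enc ?n (GBrCP_prop lang G gens)"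
      by (rule decidable_unif_reduce[OF unif restr computable_map_id Br])
    show "decidable_unif G gens enc ?n (GTCP_prop lang G gens)"
      by (rule decidable_unif_reduce[OF unif pref computable_map_Cons Tc])
  qed
qed

theorem corollary3p10:
  fixes G :: "('a, 'b) monoid_scheme" and gens :: "'a list" and \<phi> :: "'a \<Rightarrow> 'a"
  assumes "group G"
    and "set gens \<subseteq> carrier G"
    and "generate G (set gens) = carrier G"
    and "\<phi> \<in> auto G"
  shows
    "(decidable_fixed nfa_enc (Suc (length gens)) (GCP_sd_prop nfa_lang G gens \<phi>) \<longrightarrow>
        decidable_fixed nfa_enc (length gens) (GBrCP_prop nfa_lang G gens \<phi>) \<and>
        decidable_fixed nfa_enc (length gens) (GTCP_prop nfa_lang G gens \<phi>))
   \<and> (decidable_unif G gens nfa_enc (Suc (length gens)) (GCP_sd_prop nfa_lang G gens) \<longrightarrow>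
        decidable_unif G gens nfa_enc (length gens) (GBrCP_prop nfa_lang G gens) \<and>
        decidable_unif G gens nfa_enc (length gens) (GTCP_prop nfa_lang G gens))
   \<and> (decidable_fixed cfg_enc (Suc (length gens)) (GCP_sd_prop cfg_lang G gens \<phi>) \<longrightarrow>
        decidable_fixed cfg_enc (length gens) (GBrCP_prop cfg_lang G gens \<phi>) \<and>
        decidable_fixed cfg_enc (length gens) (GTCP_prop cfg_lang G gens \<phi>))
   \<and> (decidable_unif G gens cfg_enc (Suc (length gens)) (GCP_sd_prop cfg_lang G gens) \<longrightarrow>
        decidable_unif G gens cfg_enc (length gens) (GBrCP_prop cfg_lang G gens) \<and>
        decidable_unif G gens cfg_enc (length gens) (GTCP_prop cfg_lang G gens))"
  using GBrCP_GTCP_reduce_to_GCP_sd[where lang = nfa_lang and restr = "nfa_restrict (length gens)"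
      and pref = "nfa_prefix (length gens)", OF assms(1,2,4) nfa_lang_restrict computable_map_nfa_restrict
      nfa_lang_prefix computable_map_nfa_prefix]
    GBrCP_GTCP_reduce_to_GCP_sd[where lang = cfg_lang and restr = "cfg_restrict (length gens)"
      and pref = "cfg_prefix (length gens)", OF assms(1,2,4) cfg_lang_restrict computable_map_cfg_restrict
      cfg_lang_prefix computable_map_cfg_prefix]
  by blast

end
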